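(* For each integer $N>6$ there exists $r>0$ such that for every regular hyperbolic $N$-gon $P$ (in the hyperbolic plane $\mathbb{H}^2$ of curvature $-1$) of radius $<r$, any two intersecting diagonals of $P$, each of length at most $\lfloor (N-1)/6\rfloor$, have internal angle $>2\pi/3$.
   Context: The \emph{radius} of a regular polygon is the distance from its centre to any vertex. For a regular polygon $P$, a \emph{diagonal} is a geodesic segment connecting two (possibly consecutive) vertices of $P$. A \emph{segment} of $P$ is the smaller of the two pieces obtained by cutting $P$ along a diagonal (if the diagonal is an edge, the segment is that edge); the \emph{length} of a segment is the number of edges of $P$ it contains, and the \emph{length} of a diagonal is the length of the segment it subtends. If $P$ is an $N$-gon and $d_1,d_2$ are diagonals of length less than $N/2$ intersecting at a point $p$ (possibly a common endpoint), exactly one connected component of $P\setminus(d_1\cup d_2)$ contains the centre of $P$; the angle at $p$ between $d_1$ and $d_2$ lying in this component is the \emph{internal angle} between $d_1$ and $d_2$. *)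

theory Defs
  imports "HOL-Analysis.Analysis"
begin

text \<open>Hyperboloid model of the hyperbolic plane of curvature -1:
  H = {x in R^3 . <x,x> = -1, x_3 > 0} with the Minkowski form
  <x,y> = x1 y1 + x2 y2 - x3 y3.\<close>

definition mink :: "real^3 \<Rightarrow> real^3 \<Rightarrow> real" where
  "mink x y = x$1 * y$1 + x$2 * y$2 - x$3 * y$3"

definition hplane :: "(real^3) set" where
  "hplane = {x. mink x x = -1 \<and> x$3 > 0}"

definition hdist :: "real^3 \<Rightarrow> real^3 \<Rightarrow> real" where
  "hdist x y = arcosh (- mink x y)"

definition hyp_isometry :: "(real^3 \<Rightarrow> real^3) \<Rightarrow> bool" where
  "hyp_isometry f \<longleftrightarrow> f ` hplane = hplane \<and>
     (\<forall>x\<in>hplane. \<forall>y\<in>hplane. hdist (f x) (f y) = hdist x y)"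

text \<open>Hyperbolic convex hull of a finite set of points of H: the geodesic
  hull is H intersected with the cone over the Euclidean convex hull.
  For two points this is the geodesic segment.\<close>
definition hconv :: "(real^3) set \<Rightarrow> (real^3) set" where
  "hconv V = {z \<in> hplane. \<exists>l>0. l *\<^sub>R z \<in> convex hull V}"

definition hseg :: "real^3 \<Rightarrow> real^3 \<Rightarrow> (real^3) set" where
  "hseg a b = hconv {a, b}"

definition std_vertex :: "nat \<Rightarrow> real \<Rightarrow> nat \<Rightarrow> real^3" where
  "std_vertex N \<rho> k = vector [sinh \<rho> * cos (2 * pi * real k / real N),
                              sinh \<rho> * sin (2 * pi * real k / real N),
                              cosh \<rho>]"

definition hcentre0 :: "real^3" where
  "hcentre0 = vector [0, 0, 1]"

text \<open>A regular N-gon of radius \<rho> is the image of the standard one under an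
  isometry f; its vertices (cyclically labelled), region and centre:\<close>
definition rvertex :: "nat \<Rightarrow> real \<Rightarrow> (real^3 \<Rightarrow> real^3) \<Rightarrow> nat \<Rightarrow> real^3" where
  "rvertex N \<rho> f k = f (std_vertex N \<rho> (k mod N))"

definition rpolygon :: "nat \<Rightarrow> real \<Rightarrow> (real^3 \<Rightarrow> real^3) \<Rightarrow> (real^3) set" where
  "rpolygon N \<rho> f = hconv (rvertex N \<rho> f ` {..<N})"

definition rcentre :: "(real^3 \<Rightarrow> real^3) \<Rightarrow> real^3" where
  "rcentre f = f hcentre0"

text \<open>The diagonal from vertex i to vertex i+m (indices mod N); for
  1 \<le> m < N/2 it has length m.\<close>
definition rdiag :: "nat \<Rightarrow> real \<Rightarrow> (real^3 \<Rightarrow> real^3) \<Rightarrow> nat \<Rightarrow> nat \<Rightarrow> (real^3) set" where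
  "rdiag N \<rho> f i m = hseg (rvertex N \<rho> f i) (rvertex N \<rho> f (i + m))"

definition unit_tangent :: "real^3 \<Rightarrow> real^3 \<Rightarrow> bool" where
  "unit_tangent p w \<longleftrightarrow> mink p w = 0 \<and> mink w w = 1"

definition hexp :: "real^3 \<Rightarrow> real^3 \<Rightarrow> real \<Rightarrow> real^3" where
  "hexp p w t = cosh t *\<^sub>R p + sinh t *\<^sub>R w"

definition ray_dir :: "(real^3) set \<Rightarrow> real^3 \<Rightarrow> real^3 \<Rightarrow> bool" where
  "ray_dir S p w \<longleftrightarrow> unit_tangent p w \<and> (\<exists>e>0. \<forall>t\<in>{0..e}. hexp p w t \<in> S)"

text \<open>\<theta> is the internal angle at p between d1 and d2 (w.r.t. region P with
  centre c): there are a ray of d1 at p (direction x) and a ray of d2 at p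
  (direction y) such that the angular sector swept from x to y, of measure
  \<theta>, lies (near p) in the connected component of P - (d1 \<union> d2)
  containing c.\<close>
definition internal_angle ::
  "(real^3) set \<Rightarrow> real^3 \<Rightarrow> (real^3) set \<Rightarrow> (real^3) set \<Rightarrow> real^3 \<Rightarrow> real \<Rightarrow> bool" where
  "internal_angle P c d1 d2 p \<theta> \<longleftrightarrow>
     0 < \<theta> \<and> \<theta> < 2 * pi \<and>
     (\<exists>x y z. ray_dir d1 p x \<and> ray_dir d2 p y \<and> unit_tangent p z \<and> mink x z = 0 \<and>
        y = cos \<theta> *\<^sub>R x + sin \<theta> *\<^sub>R z \<and>
        (\<forall>s\<in>{0<..<\<theta>}. \<exists>e>0. \<forall>t\<in>{0<..<e}.
           hexp p (cos s *\<^sub>R x + sin s *\<^sub>R z) t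
             \<in> connected_component_set (P - (d1 \<union> d2)) c))"

end

theory Submission
  imports Defs
begin

text \<open>Work in the standard position, where the polygon is centred at (0,0,1) and its vertices
  lie on the circle \<open>(sinh \<rho> cos \<phi>, sinh \<rho> sin \<phi>, cosh \<rho>)\<close>; isometries are restrictions of
  linear maps preserving the Minkowski form, so everything transports. The diagonal from angle
  \<open>\<mu> - \<delta>\<close> to \<open>\<mu> + \<delta>\<close> lies on the hyperplane Minkowski-orthogonal to a normal vector
  \<open>\<nu> = (-cosh \<rho> cos \<mu>, -cosh \<rho> sin \<mu>, -sinh \<rho> cos \<delta>)\<close>, and the polygon meets this hyperplane
  only in the diagonal. Hence the component of the centre in the complement of two diagonals
  lies on the positive side of both normals, and the internal angle at their intersection is
  \<open>\<pi>\<close> minus the angle between the normals. The latter is below \<open>\<pi>/3\<close> as soon as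
  \<open>sinh\<^sup>2 \<rho> < cos(\<delta>\<^sub>1 + \<delta>\<^sub>2) - 1/2\<close>: two diagonals that meet have directions \<open>\<mu>\<^sub>1, \<mu>\<^sub>2\<close> with
  \<open>cos(\<mu>\<^sub>1 - \<mu>\<^sub>2) \<ge> cos(\<delta>\<^sub>1 + \<delta>\<^sub>2)\<close>, and diagonals of length at most \<open>\<lfloor>(N-1)/6\<rfloor>\<close> have
  \<open>\<delta>\<^sub>1 + \<delta>\<^sub>2 < \<pi>/3\<close>.\<close>

subsection \<open>The Minkowski form\<close>

lemma vec3_eq_iff: "(x::real^3) = y \<longleftrightarrow> x$1 = y$1 \<and> x$2 = y$2 \<and> x$3 = y$3"
  by (simp add: vec_eq_iff forall_3)

lemma mink_commute: "mink x y = mink y x"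
  by (simp add: mink_def mult.commute)

lemma mink_add_right [simp]: "mink x (y + z) = mink x y + mink x z"
  and mink_add_left [simp]: "mink (y + z) x = mink y x + mink z x"
  and mink_diff_right [simp]: "mink x (y - z) = mink x y - mink x z"
  and mink_diff_left [simp]: "mink (y - z) x = mink y x - mink z x"
  and mink_scaleR_right [simp]: "mink x (a *\<^sub>R y) = a * mink x y"
  and mink_scaleR_left [simp]: "mink (a *\<^sub>R y) x = a * mink y x"
  and mink_zero_right [simp]: "mink x 0 = 0"
  and mink_zero_left [simp]: "mink 0 x = 0"
  by (simp_all add: mink_def algebra_simps)

lemma mink_eq_inner: "mink n q = inner (vector [n$1, n$2, - n$3] :: real^3) q"
  by (simp add: mink_def inner_vec_def sum_3)

lemma mink_nondegenerate:
  assumes "\<And>u. mink w u = 0"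
  shows "w = (0::real^3)"
proof -
  have "mink w (vector [1,0,0]) = 0" "mink w (vector [0,1,0]) = 0" "mink w (vector [0,0,1]) = 0"
    using assms by auto
  then show ?thesis by (simp add: mink_def vec3_eq_iff)
qed

lemma lorentz_cauchy_schwarz_real:
  fixes a b c x y z :: real
  assumes "a^2 + b^2 + 1 = c^2" "0 < c" "x^2 + y^2 + 1 = z^2" "0 < z"
  shows "a * x + b * y + 1 \<le> c * z"
proof (rule power2_le_imp_le)
  have "(c * z)^2 - (a * x + b * y + 1)^2 = (a^2 + b^2 + 1) * (x^2 + y^2 + 1) - (a * x + b * y + 1)^2"
    using assms by (simp add: power_mult_distrib)
  also have "\<dots> = (a * y - b * x)^2 + (a - x)^2 + (b - y)^2"
    by (simp add: power2_eq_square algebra_simps)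
  finally show "(a * x + b * y + 1)^2 \<le> (c * z)^2"
    by (smt (verit) zero_le_power2)
  show "0 \<le> c * z" using assms by simp
qed

lemma hplane_mink_le:
  assumes "u \<in> hplane" "v \<in> hplane"
  shows "mink u v \<le> -1"
proof -
  have "u$1 * u$1 + u$2 * u$2 - u$3 * u$3 = -1" "u$3 > 0"
    "v$1 * v$1 + v$2 * v$2 - v$3 * v$3 = -1" "v$3 > 0"
    using assms unfolding hplane_def mink_def by auto
  then have "u$1 * v$1 + u$2 * v$2 + 1 \<le> u$3 * v$3"
    by (intro lorentz_cauchy_schwarz_real) (simp_all add: power2_eq_square)
  then show ?thesis by (simp add: mink_def)
qed

lemma hyp_isometry_hplane: "hyp_isometry f \<Longrightarrow> u \<in> hplane \<Longrightarrow> f u \<in> hplane"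
  unfolding hyp_isometry_def by blast

lemma hyp_isometry_mink:
  assumes f: "hyp_isometry f" and u: "u \<in> hplane" and v: "v \<in> hplane"
  shows "mink (f u) (f v) = mink u v"
proof -
  have fuv: "f u \<in> hplane" "f v \<in> hplane"
    using hyp_isometry_hplane[OF f] u v by auto
  have "cosh (hdist (f u) (f v)) = cosh (hdist u v)"
    using f u v unfolding hyp_isometry_def by simp
  moreover have "cosh (hdist x y) = - mink x y" if "x \<in> hplane" "y \<in> hplane" for x y
    unfolding hdist_def using hplane_mink_le[OF that] by (intro cosh_arcosh_real) linarith
  ultimately show ?thesis using fuv u v by simp
qed

subsection \<open>Isometries are linear\<close>

text \<open>Three points of the hyperboloid forming a basis of \<open>\<real>\<^sup>3\<close>, with their dual coordinates.\<close>
definition hbase0 :: "real^3" where "hbase0 = vector [0, 0, 1]"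
definition hbase1 :: "real^3" where "hbase1 = vector [3/4, 0, 5/4]"
definition hbase2 :: "real^3" where "hbase2 = vector [0, 3/4, 5/4]"
definition hcoord0 :: "real^3 \<Rightarrow> real" where "hcoord0 u = u$3 - 5/3 * (u$1 + u$2)"
definition hcoord1 :: "real^3 \<Rightarrow> real" where "hcoord1 u = 4/3 * u$1"
definition hcoord2 :: "real^3 \<Rightarrow> real" where "hcoord2 u = 4/3 * u$2"

definition iso_lin :: "(real^3 \<Rightarrow> real^3) \<Rightarrow> real^3 \<Rightarrow> real^3" where
  "iso_lin f u = hcoord0 u *\<^sub>R f hbase0 + hcoord1 u *\<^sub>R f hbase1 + hcoord2 u *\<^sub>R f hbase2"

lemma hbase_hplane: "hbase0 \<in> hplane" "hbase1 \<in> hplane" "hbase2 \<in> hplane"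
  by (simp_all add: hplane_def mink_def hbase0_def hbase1_def hbase2_def)

lemma hbase_expand: "u = hcoord0 u *\<^sub>R hbase0 + hcoord1 u *\<^sub>R hbase1 + hcoord2 u *\<^sub>R hbase2"
  by (simp add: vec3_eq_iff hbase0_def hbase1_def hbase2_def hcoord0_def hcoord1_def hcoord2_def
      algebra_simps)

lemma iso_lin_hbase: "iso_lin f hbase0 = f hbase0" "iso_lin f hbase1 = f hbase1"
    "iso_lin f hbase2 = f hbase2"
  by (simp_all add: iso_lin_def hcoord0_def hcoord1_def hcoord2_def hbase0_def hbase1_def hbase2_def)

lemma hcoord_add: "hcoord0 (x + y) = hcoord0 x + hcoord0 y" "hcoord1 (x + y) = hcoord1 x + hcoord1 y"
    "hcoord2 (x + y) = hcoord2 x + hcoord2 y"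
  and hcoord_scaleR: "hcoord0 (c *\<^sub>R x) = c * hcoord0 x" "hcoord1 (c *\<^sub>R x) = c * hcoord1 x"
    "hcoord2 (c *\<^sub>R x) = c * hcoord2 x"
  by (simp_all add: hcoord0_def hcoord1_def hcoord2_def algebra_simps)

lemma linear_iso_lin: "linear (iso_lin f)"
  by (rule linearI) (simp_all add: iso_lin_def hcoord_add hcoord_scaleR scaleR_add_left scaleR_add_right)

lemma iso_lin_mink:
  assumes f: "hyp_isometry f"
  shows "mink (iso_lin f u) (iso_lin f v) = mink u v"
proof -
  have "mink (f a) (f b) = mink a b" if "a \<in> {hbase0, hbase1, hbase2}" "b \<in> {hbase0, hbase1, hbase2}"
    for a b using hyp_isometry_mink[OF f] hbase_hplane that by auto
  then have "mink (iso_lin f u) (iso_lin f v) =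
      mink (hcoord0 u *\<^sub>R hbase0 + hcoord1 u *\<^sub>R hbase1 + hcoord2 u *\<^sub>R hbase2)
           (hcoord0 v *\<^sub>R hbase0 + hcoord1 v *\<^sub>R hbase1 + hcoord2 v *\<^sub>R hbase2)"
    by (simp add: iso_lin_def)
  then show ?thesis using hbase_expand[of u] hbase_expand[of v] by simp
qed

lemma inj_iso_lin:
  assumes f: "hyp_isometry f"
  shows "inj (iso_lin f)"
proof (rule linear_injective_0[THEN iffD2, OF linear_iso_lin], intro allI impI)
  fix u assume "iso_lin f u = 0"
  then have "mink u v = 0" for v using iso_lin_mink[OF f, of u v] by simp
  then show "u = 0" using mink_nondegenerate by blast
qed

text \<open>The difference \<open>f v - iso_lin f v\<close> is Minkowski-orthogonal to the image of the basis, which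
  spans since \<open>iso_lin f\<close> is injective, hence onto.\<close>
lemma hyp_isometry_eq_iso_lin:
  assumes f: "hyp_isometry f" and v: "v \<in> hplane"
  shows "f v = iso_lin f v"
proof -
  let ?w = "f v - iso_lin f v"
  have "mink ?w (f b) = 0" if "b \<in> {hbase0, hbase1, hbase2}" for b
    using hyp_isometry_mink[OF f v] iso_lin_mink[OF f, of v b] iso_lin_hbase hbase_hplane that
    by auto
  then have orth: "mink ?w (iso_lin f u) = 0" for u
    by (simp add: iso_lin_def)
  have "surj (iso_lin f)"
    using linear_iso_lin inj_iso_lin[OF f] by (simp add: linear_injective_imp_surjective)
  then have "mink ?w z = 0" for z
    using orth by (metis surj_def)
  then have "?w = 0" by (rule mink_nondegenerate)
  then show ?thesis by simp
qed

subsection \<open>Hyperbolic convex hulls\<close>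

lemma hconvE:
  assumes "q \<in> hconv V"
  obtains l where "q \<in> hplane" "l > 0" "l *\<^sub>R q \<in> convex hull V"
  using assms unfolding hconv_def by blast

lemma convex_hull_mink_le:
  assumes "\<And>v. v \<in> V \<Longrightarrow> mink n v \<le> 0" "w \<in> convex hull V"
  shows "mink n w \<le> 0"
proof -
  have "convex hull V \<subseteq> {x. inner (vector [n$1, n$2, - n$3] :: real^3) x \<le> 0}"
    by (rule hull_minimal) (use assms(1) in \<open>auto simp: mink_eq_inner convex_halfspace_le\<close>)
  then show ?thesis using assms(2) by (auto simp: mink_eq_inner)
qed

lemma convex_hull_mink_gt:
  assumes "\<And>v. v \<in> V \<Longrightarrow> mink n v > 0" "w \<in> convex hull V"
  shows "mink n w > 0"
proof -
  have "convex hull V \<subseteq> {x. inner (vector [n$1, n$2, - n$3] :: real^3) x > 0}"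
    by (rule hull_minimal) (use assms(1) in \<open>auto simp: mink_eq_inner convex_halfspace_gt\<close>)
  then show ?thesis using assms(2) by (auto simp: mink_eq_inner)
qed

lemma convex_hull_hplane_third_pos:
  assumes "V \<subseteq> hplane" "w \<in> convex hull V"
  shows "w$3 > 0"
proof -
  have "mink (vector [0, 0, -1]) u = u$3" for u
    by (simp add: mink_def)
  then show ?thesis
    using convex_hull_mink_gt[of V "vector [0, 0, -1]" w] assms by (auto simp: hplane_def)
qed

lemma hconv_image_hyp_isometry:
  assumes f: "hyp_isometry f" and V: "V \<subseteq> hplane"
  shows "hconv (f ` V) = iso_lin f ` hconv V"
proof -
  have "f ` V = iso_lin f ` V"
    using hyp_isometry_eq_iso_lin[OF f] V by (force simp: image_def)
  then have hull: "convex hull (f ` V) = iso_lin f ` (convex hull V)"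
    by (simp add: convex_hull_linear_image[OF linear_iso_lin])
  have fV: "f ` V \<subseteq> hplane" using hyp_isometry_hplane[OF f] V by auto
  have scale: "iso_lin f (a *\<^sub>R x) = a *\<^sub>R iso_lin f x" for a x
    using linear_iso_lin[of f] by (simp add: linear_scale)
  show ?thesis
  proof
    show "hconv (f ` V) \<subseteq> iso_lin f ` hconv V"
    proof
      fix z assume "z \<in> hconv (f ` V)"
      then obtain l w where z: "z \<in> hplane" "l > 0" "w \<in> convex hull V" "l *\<^sub>R z = iso_lin f w"
        by (auto elim!: hconvE simp: hull)
      let ?z' = "(1/l) *\<^sub>R w"
      have z': "iso_lin f ?z' = z" using z(2) by (simp add: scale flip: z(4))
      have "mink ?z' ?z' = -1" using iso_lin_mink[OF f, of ?z' ?z'] z' z(1) by (simp add: hplane_def)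
      moreover have "?z' $ 3 > 0" using convex_hull_hplane_third_pos[OF V z(3)] z(2) by simp
      moreover have "l *\<^sub>R ?z' \<in> convex hull V" using z by simp
      ultimately have "?z' \<in> hconv V" unfolding hconv_def hplane_def using z(2) by blast
      then show "z \<in> iso_lin f ` hconv V" using z' by (metis imageI)
    qed
    show "iso_lin f ` hconv V \<subseteq> hconv (f ` V)"
    proof
      fix z assume "z \<in> iso_lin f ` hconv V"
      then obtain z' l where z': "z = iso_lin f z'" "z' \<in> hplane" "l > 0" "l *\<^sub>R z' \<in> convex hull V"
        by (auto elim!: hconvE)
      have m: "l *\<^sub>R z \<in> convex hull (f ` V)"
        unfolding hull z'(1) scale[symmetric] using z'(4) by (rule imageI)
      have "(l *\<^sub>R z) $ 3 > 0" by (rule convex_hull_hplane_third_pos[OF fV m])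
      then have "z $ 3 > 0" using z'(3) by (simp add: zero_less_mult_iff)
      moreover have "mink z z = -1"
        using iso_lin_mink[OF f, of z' z'] z' by (simp add: hplane_def)
      ultimately show "z \<in> hconv (f ` V)" unfolding hconv_def hplane_def using m z'(3) by blast
    qed
  qed
qed

subsection \<open>Angles at a point from normal vectors\<close>

definition mink_cross :: "real^3 \<Rightarrow> real^3 \<Rightarrow> real^3" where
  "mink_cross a b = vector [a$2 * b$3 - a$3 * b$2, a$3 * b$1 - a$1 * b$3, - (a$1 * b$2 - a$2 * b$1)]"

lemma mink_cross_identities:
  fixes a1 a2 a3 b1 b2 b3 z1 z2 z3 G11 G12 G22 wa wb wk k1 k2 k3 :: real
  assumes "G11 = a1*a1 + a2*a2 - a3*a3" "G12 = a1*b1 + a2*b2 - a3*b3" "G22 = b1*b1 + b2*b2 - b3*b3"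
    "wa = z1*a1 + z2*a2 - z3*a3" "wb = z1*b1 + z2*b2 - z3*b3"
    "k1 = a2*b3 - a3*b2" "k2 = a3*b1 - a1*b3" "k3 = - (a1*b2 - a2*b1)"
    "wk = z1*k1 + z2*k2 - z3*k3"
  shows "(G12*G12 - G11*G22) * z1 = - (G22*wa - G12*wb) * a1 - (G11*wb - G12*wa) * b1 + wk*k1"
    "(G12*G12 - G11*G22) * z2 = - (G22*wa - G12*wb) * a2 - (G11*wb - G12*wa) * b2 + wk*k2"
    "(G12*G12 - G11*G22) * z3 = - (G22*wa - G12*wb) * a3 - (G11*wb - G12*wa) * b3 + wk*k3"
    "k1*k1 + k2*k2 - k3*k3 = G12*G12 - G11*G22"
    "k1*a1 + k2*a2 - k3*a3 = 0" "k1*b1 + k2*b2 - k3*b3 = 0"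
  unfolding assms by algebra+

lemma mink_frame_expand:
  assumes "mink p p = -1" "mink p x = 0" "mink x x = 1"
  defines "k \<equiv> mink_cross p x"
  shows "v = (- mink v p) *\<^sub>R p + mink v x *\<^sub>R x + mink v k *\<^sub>R k"
    and "mink k k = 1" "mink k p = 0" "mink k x = 0"
proof -
  have h: "-1 = p$1*p$1 + p$2*p$2 - p$3*p$3" "0 = p$1*x$1 + p$2*x$2 - p$3*x$3"
    "1 = x$1*x$1 + x$2*x$2 - x$3*x$3"
    "mink v p = v$1*p$1 + v$2*p$2 - v$3*p$3" "mink v x = v$1*x$1 + v$2*x$2 - v$3*x$3"
    "k$1 = p$2*x$3 - p$3*x$2" "k$2 = p$3*x$1 - p$1*x$3" "k$3 = - (p$1*x$2 - p$2*x$1)"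
    "mink v k = v$1*k$1 + v$2*k$2 - v$3*k$3"
    using assms by (simp_all add: mink_def mink_cross_def)
  note I = mink_cross_identities[OF h]
  show "v = (- mink v p) *\<^sub>R p + mink v x *\<^sub>R x + mink v k *\<^sub>R k"
    using I(1-3) by (simp add: vec3_eq_iff)
  show "mink k k = 1" "mink k p = 0" "mink k x = 0"
    using I(4-6) by (simp_all add: mink_def)
qed

text \<open>Coordinates in an orthonormal basis \<open>x, k\<close> of the tangent plane:
  \<open>N\<^sub>1 = \<mu> k\<close>, \<open>N\<^sub>2 = b' x + g' k\<close> and \<open>y = b x + g k\<close>.\<close>
lemma frame_coords_lt_neg_half:
  fixes mu b' g' b g :: real
  assumes "mu * g > 0" "b' > 0" "b * b' + g * g' = 0" "b^2 + g^2 = 1" "mu * g' > 0"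
    "4 * (mu * g')^2 > mu^2 * (b'^2 + g'^2)"
  shows "b < -1/2"
proof -
  have "mu \<noteq> 0" using assms(1) by auto
  then have mu: "mu^2 > 0" by simp
  have "mu^2 * (4 * g'^2) > mu^2 * (b'^2 + g'^2)" using assms(6) by (simp add: power_mult_distrib)
  then have q: "4 * g'^2 > b'^2 + g'^2" using mu by (simp add: mult_less_cancel_left_pos)
  have "mu^2 * (g * g') = (mu * g) * (mu * g')" by (simp add: power2_eq_square)
  then have "mu^2 * (g * g') > 0" using assms(1,5) by (metis mult_pos_pos)
  then have "g * g' > 0" using mu by (simp add: zero_less_mult_iff)
  then have bneg: "b < 0" using assms(2,3) by (smt (verit) mult_nonneg_nonneg)
  have bb: "b * b' = - (g * g')" using assms(3) by linarith
  have "b^2 * (b'^2 + g'^2) = (b * b')^2 + b^2 * g'^2" unfolding power2_eq_square by algebra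
  also have "\<dots> = g'^2 * (b^2 + g^2)" unfolding bb power2_eq_square by algebra
  finally have "b^2 * (b'^2 + g'^2) = g'^2" using assms(4) by simp
  then have "(4 * b^2 - 1) * (b'^2 + g'^2) > 0" using q by (simp add: algebra_simps)
  moreover have "b'^2 + g'^2 > 0" using assms(2) by (simp add: add_pos_nonneg)
  ultimately have "(1/2)^2 < (-b)^2" by (simp add: zero_less_mult_iff power2_eq_square)
  then have "1/2 < -b" by (rule power2_less_imp_less) (use bneg in linarith)
  then show ?thesis by simp
qed

text \<open>The hypotheses \<open>gram\<close> say that the normals make an angle below \<open>\<pi>/3\<close>.\<close>
lemma unit_tangents_mink_lt_neg_half:
  assumes p: "mink p p = -1" and x: "unit_tangent p x" and y: "unit_tangent p y"
    and N: "mink N1 p = 0" "mink N2 p = 0" "mink N1 x = 0" "mink N2 y = 0"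
    and signs: "mink N1 y > 0" "mink N2 x > 0"
    and gram: "mink N1 N2 > 0" "4 * (mink N1 N2)^2 > mink N1 N1 * mink N2 N2"
  shows "mink y x < -1/2"
proof -
  have ux: "mink p x = 0" "mink x x = 1" and uy: "mink p y = 0" "mink y y = 1"
    using x y unfolding unit_tangent_def by auto
  define k where "k = mink_cross p x"
  note F = mink_frame_expand[OF p ux, folded k_def]
  have kx: "mink x k = 0" using F(4) by (simp add: mink_commute)
  define mu b' g' b g where "mu = mink N1 k" "b' = mink N2 x" "g' = mink N2 k" "b = mink y x"
    "g = mink y k"
  have eN1: "N1 = mu *\<^sub>R k" using F(1)[of N1] N(1,3) unfolding mu_b'_g'_b_g_def by simp
  have eN2: "N2 = b' *\<^sub>R x + g' *\<^sub>R k" using F(1)[of N2] N(2) unfolding mu_b'_g'_b_g_def by simp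
  have ey: "y = b *\<^sub>R x + g *\<^sub>R k"
    using F(1)[of y] uy(1) mink_commute[of y p] unfolding mu_b'_g'_b_g_def by simp
  show ?thesis
    unfolding mu_b'_g'_b_g_def(4)[symmetric]
  proof (rule frame_coords_lt_neg_half)
    show "mu * g > 0" using signs(1) F(2) F(4) unfolding eN1 ey by (simp add: mult.commute)
    show "b' > 0" using signs(2) unfolding mu_b'_g'_b_g_def by simp
    show "b * b' + g * g' = 0"
      using N(4) F(2) kx ux(2) unfolding eN2 ey by (simp add: mink_commute[of k x] algebra_simps)
    show "b^2 + g^2 = 1"
      using uy(2) F(2) kx ux(2) unfolding ey by (simp add: mink_commute[of k x] power2_eq_square)
    show "mu * g' > 0" using gram(1) F(2) F(4) unfolding eN1 eN2 by (simp add: mult.commute)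
    show "4 * (mu * g')^2 > mu^2 * (b'^2 + g'^2)"
      using gram(2) F(2) F(4) kx ux(2) unfolding eN1 eN2
      by (simp add: mink_commute[of k x] power2_eq_square algebra_simps)
  qed
qed

lemma ray_dir_mink_eq_0:
  assumes "ray_dir D p x" and D: "\<And>q. q \<in> D \<Longrightarrow> mink n q = 0"
  shows "mink n p = 0" "mink n x = 0"
proof -
  obtain e where e: "e > 0" "\<forall>t\<in>{0..e}. hexp p x t \<in> D"
    using assms(1) unfolding ray_dir_def by blast
  have "mink n (hexp p x 0) = 0" "mink n (hexp p x e) = 0" using e D by auto
  then show np: "mink n p = 0" by (simp add: hexp_def)
  with \<open>mink n (hexp p x e) = 0\<close> show "mink n x = 0" using e(1) by (simp add: hexp_def)
qed

lemma mink_hexp_pos_imp: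
  assumes "mink n p = 0" "t > 0" "mink n (hexp p w t) > 0"
  shows "mink n w > 0"
  using assms by (simp add: hexp_def zero_less_mult_iff)

lemma internal_angle_gt_of_normals:
  assumes ia: "internal_angle P c D1 D2 p \<theta>" and p: "p \<in> hplane"
    and D1: "\<And>q. q \<in> D1 \<Longrightarrow> mink N1 q = 0" and D2: "\<And>q. q \<in> D2 \<Longrightarrow> mink N2 q = 0"
    and K: "\<And>q. q \<in> connected_component_set (P - (D1 \<union> D2)) c \<Longrightarrow> mink N1 q > 0 \<and> mink N2 q > 0"
    and gram: "mink N1 N2 > 0" "4 * (mink N1 N2)^2 > mink N1 N1 * mink N2 N2"
  shows "2 * pi / 3 < \<theta>"
proof (cases "\<theta> < pi")
  case False
  then show ?thesis using pi_gt_zero by linarith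
next
  case True
  obtain x y z where rx: "ray_dir D1 p x" and ry: "ray_dir D2 p y" and xz: "mink x z = 0"
      and y: "y = cos \<theta> *\<^sub>R x + sin \<theta> *\<^sub>R z" and \<theta>: "0 < \<theta>"
      and sector: "\<forall>s\<in>{0<..<\<theta>}. \<exists>e>0. \<forall>t\<in>{0<..<e}.
        hexp p (cos s *\<^sub>R x + sin s *\<^sub>R z) t \<in> connected_component_set (P - (D1 \<union> D2)) c"
    using ia unfolding internal_angle_def by blast
  have N1: "mink N1 p = 0" "mink N1 x = 0" using ray_dir_mink_eq_0[OF rx D1] by auto
  have N2: "mink N2 p = 0" "mink N2 y = 0" using ray_dir_mink_eq_0[OF ry D2] by auto
  define w where "w = cos (\<theta>/2) *\<^sub>R x + sin (\<theta>/2) *\<^sub>R z"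
  obtain e where "e > 0" "hexp p w (e/2) \<in> connected_component_set (P - (D1 \<union> D2)) c"
    using sector \<theta> unfolding w_def by (metis field_sum_of_halves greaterThanLessThan_iff
        half_gt_zero less_add_same_cancel2)
  then have Nw: "mink N1 w > 0" "mink N2 w > 0"
    using K mink_hexp_pos_imp N1(1) N2(1) half_gt_zero by blast+
  have sin: "sin \<theta> > 0" "sin (\<theta>/2) > 0" using \<theta> True by (simp_all add: sin_gt_zero)
  have "mink N1 w = sin (\<theta>/2) * mink N1 z" using N1 by (simp add: w_def)
  then have "mink N1 z > 0" using Nw(1) sin(2) by (simp add: zero_less_mult_iff)
  then have N1y: "mink N1 y > 0" using N1(2) sin(1) by (simp add: y)
  have "sin \<theta> * mink N2 w - sin (\<theta>/2) * mink N2 y = sin (\<theta> - \<theta>/2) * mink N2 x"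
    unfolding w_def y sin_diff[of \<theta> "\<theta>/2"] by (simp add: algebra_simps)
  then have "sin \<theta> * mink N2 w = sin (\<theta>/2) * mink N2 x" using N2(2) by simp
  then have N2x: "mink N2 x > 0" using Nw(2) sin by (smt (verit) mult_pos_pos zero_less_mult_iff)
  have ux: "unit_tangent p x" and uy: "unit_tangent p y"
    using rx ry unfolding ray_dir_def by auto
  have "mink y x = cos \<theta>"
    using xz ux unfolding y unit_tangent_def by (simp add: mink_commute[of z x])
  moreover have "mink y x < -1/2"
    using p N1 N2 N1y N2x gram by (intro unit_tangents_mink_lt_neg_half[OF _ ux uy]) (auto simp: hplane_def)
  ultimately have "cos \<theta> < cos (2 * pi / 3)" by (simp add: cos_120)
  then show ?thesis
    using \<theta> cos_monotone_0_pi_le[of \<theta> "2 * pi / 3"] by (cases "\<theta> \<le> 2 * pi / 3") auto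
qed

subsection \<open>Chords of a circle on the hyperboloid\<close>

definition circle_point :: "real \<Rightarrow> real \<Rightarrow> real \<Rightarrow> real^3" where
  "circle_point s h \<phi> = vector [s * cos \<phi>, s * sin \<phi>, h]"

definition chord_normal :: "real \<Rightarrow> real \<Rightarrow> real \<Rightarrow> real \<Rightarrow> real^3" where
  "chord_normal s h \<mu> \<delta> = vector [- h * cos \<mu>, - h * sin \<mu>, - s * cos \<delta>]"

definition hchord :: "real \<Rightarrow> real \<Rightarrow> real \<Rightarrow> real \<Rightarrow> (real^3) set" where
  "hchord s h \<mu> \<delta> = hconv {circle_point s h (\<mu> - \<delta>), circle_point s h (\<mu> + \<delta>)}"

lemma circle_point_hplane:
  assumes "h^2 = 1 + s^2" "h > 0"
  shows "circle_point s h \<phi> \<in> hplane"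
proof -
  have "cos \<phi> * cos \<phi> + sin \<phi> * sin \<phi> = 1"
    using sin_cos_squared_add[of \<phi>] by (simp add: power2_eq_square)
  then have "mink (circle_point s h \<phi>) (circle_point s h \<phi>) = -1"
    using assms(1) unfolding mink_def circle_point_def vector_3 power2_eq_square by algebra
  then show ?thesis using assms by (simp add: hplane_def circle_point_def)
qed

lemma mink_chord_normal_endpoints:
  "mink (chord_normal s h \<mu> \<delta>) (circle_point s h (\<mu> - \<delta>)) = 0"
  "mink (chord_normal s h \<mu> \<delta>) (circle_point s h (\<mu> + \<delta>)) = 0"
proof -
  have "cos \<mu> * cos \<mu> + sin \<mu> * sin \<mu> = 1"
    using sin_cos_squared_add[of \<mu>] by (simp add: power2_eq_square)
  then show "mink (chord_normal s h \<mu> \<delta>) (circle_point s h (\<mu> - \<delta>)) = 0"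
    "mink (chord_normal s h \<mu> \<delta>) (circle_point s h (\<mu> + \<delta>)) = 0"
    unfolding mink_def chord_normal_def circle_point_def vector_3 cos_diff sin_diff cos_add sin_add
    by algebra+
qed

lemma mink_chord_normal_hcentre0: "mink (chord_normal s h \<mu> \<delta>) hcentre0 = s * cos \<delta>"
  by (simp add: mink_def chord_normal_def hcentre0_def)

lemma mink_chord_normals:
  "mink (chord_normal s h \<mu>1 \<delta>1) (chord_normal s h \<mu>2 \<delta>2)
     = h^2 * cos (\<mu>1 - \<mu>2) - s^2 * cos \<delta>1 * cos \<delta>2"
  by (simp add: mink_def chord_normal_def cos_diff power2_eq_square algebra_simps)

lemma mink_chord_normal_hchord:
  assumes "q \<in> hchord s h \<mu> \<delta>"
  shows "mink (chord_normal s h \<mu> \<delta>) q = 0"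
proof -
  obtain l where "l > 0"
      "l *\<^sub>R q \<in> convex hull {circle_point s h (\<mu> - \<delta>), circle_point s h (\<mu> + \<delta>)}"
    using assms unfolding hchord_def by (auto elim!: hconvE)
  moreover from this(2) obtain u v where
      "l *\<^sub>R q = u *\<^sub>R circle_point s h (\<mu> - \<delta>) + v *\<^sub>R circle_point s h (\<mu> + \<delta>)"
    unfolding convex_hull_2 by blast
  ultimately have "l * mink (chord_normal s h \<mu> \<delta>) q = 0"
    by (metis mink_scaleR_right mink_add_right mink_chord_normal_endpoints mult_zero_right add_0)
  then show ?thesis using \<open>l > 0\<close> by simp
qed

text \<open>The tangent plane of the cone over the circle along the generator at angle \<open>\<phi>\<close>.\<close>
lemma mink_circle_point_tangent_le:
  assumes "s \<ge> 0" "h \<ge> 0"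
  shows "mink (vector [h * cos \<phi>, h * sin \<phi>, s]) (circle_point s h \<theta>) \<le> 0"
proof -
  have "cos \<phi> * cos \<theta> + sin \<phi> * sin \<theta> \<le> 1" using cos_le_one[of "\<phi> - \<theta>"] by (simp add: cos_diff)
  then have "h * s * (cos \<phi> * cos \<theta> + sin \<phi> * sin \<theta>) \<le> h * s"
    using assms by (simp add: mult_left_le)
  then show ?thesis by (simp add: mink_def circle_point_def algebra_simps)
qed

lemma chord_cone_coordinates:
  fixes cm sm cd sd s h w1 w2 w3 :: real
  assumes c: "cm^2 + sm^2 = 1" "cd^2 + sd^2 = 1" and l: "-h * cm * w1 - h * sm * w2 + s * cd * w3 = 0"
  defines "A1 \<equiv> cm * cd + sm * sd" and "B1 \<equiv> sm * cd - cm * sd"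
    and "A2 \<equiv> cm * cd - sm * sd" and "B2 \<equiv> sm * cd + cm * sd"
  shows "s * ((w1 * B2 - w2 * A2) * A1 + (A1 * w2 - B1 * w1) * A2) = w1 * (2 * s * sd * cd)"
    "s * ((w1 * B2 - w2 * A2) * B1 + (A1 * w2 - B1 * w1) * B2) = w2 * (2 * s * sd * cd)"
    "h * ((w1 * B2 - w2 * A2) + (A1 * w2 - B1 * w1)) = w3 * (2 * s * sd * cd)"
  using c l unfolding A1_def B1_def A2_def B2_def power2_eq_square by algebra+

lemma chord_cone_signs:
  fixes cm sm cd sd s h w1 w2 w3 al be :: real
  assumes c: "cm^2 + sm^2 = 1" "cd^2 + sd^2 = 1"
  defines "A1 \<equiv> cm * cd + sm * sd" and "B1 \<equiv> sm * cd - cm * sd"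
    and "A2 \<equiv> cm * cd - sm * sd" and "B2 \<equiv> sm * cd + cm * sd"
  assumes w: "w1 = s * (al * A1 + be * A2)" "w2 = s * (al * B1 + be * B2)" "w3 = h * (al + be)"
  shows "s * w3 - h * (A2 * w1 + B2 * w2) = 2 * s * h * al * sd^2"
    "s * w3 - h * (A1 * w1 + B1 * w2) = 2 * s * h * be * sd^2"
  using c unfolding w A1_def B1_def A2_def B2_def power2_eq_square by algebra+

text \<open>A vector of the plane \<open>chord_normal\<^sup>\<bottom>\<close> lying between the tangent planes of the cone along
  the two endpoints of the chord is a nonnegative combination of the endpoints.\<close>
lemma chord_plane_cone_combination:
  assumes s: "s > 0" "h > 0" and \<delta>: "sin \<delta> > 0" "cos \<delta> > 0"
    and ha: "mink (vector [h * cos (\<mu> - \<delta>), h * sin (\<mu> - \<delta>), s]) w \<le> 0"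
    and hb: "mink (vector [h * cos (\<mu> + \<delta>), h * sin (\<mu> + \<delta>), s]) w \<le> 0"
    and l: "mink (chord_normal s h \<mu> \<delta>) w = 0"
  shows "\<exists>al be. al \<ge> 0 \<and> be \<ge> 0 \<and>
    w = al *\<^sub>R circle_point s h (\<mu> - \<delta>) + be *\<^sub>R circle_point s h (\<mu> + \<delta>)"
proof -
  define A1 B1 A2 B2 where "A1 = cos \<mu> * cos \<delta> + sin \<mu> * sin \<delta>" "B1 = sin \<mu> * cos \<delta> - cos \<mu> * sin \<delta>"
    "A2 = cos \<mu> * cos \<delta> - sin \<mu> * sin \<delta>" "B2 = sin \<mu> * cos \<delta> + cos \<mu> * sin \<delta>"
  have trig: "cos (\<mu> - \<delta>) = A1" "sin (\<mu> - \<delta>) = B1" "cos (\<mu> + \<delta>) = A2" "sin (\<mu> + \<delta>) = B2"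
    unfolding A1_B1_A2_B2_def by (simp_all add: cos_diff sin_diff cos_add sin_add)
  define D where "D = 2 * s * sin \<delta> * cos \<delta>"
  have D: "D > 0" unfolding D_def using s \<delta> by simp
  define al be where "al = (w$1 * B2 - w$2 * A2) / D" "be = (A1 * w$2 - B1 * w$1) / D"
  have "- h * cos \<mu> * w$1 - h * sin \<mu> * w$2 + s * cos \<delta> * w$3 = 0"
    using l unfolding mink_def chord_normal_def by simp
  note C = chord_cone_coordinates[OF sin_cos_squared_add2 sin_cos_squared_add2 this,
      folded A1_B1_A2_B2_def D_def]
  have e: "w$1 = s * (al * A1 + be * A2)" "w$2 = s * (al * B1 + be * B2)" "w$3 = h * (al + be)"
  proof -
    have "s * (al * A1 + be * A2) = s * ((w$1 * B2 - w$2 * A2) * A1 + (A1 * w$2 - B1 * w$1) * A2) / D"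
      "s * (al * B1 + be * B2) = s * ((w$1 * B2 - w$2 * A2) * B1 + (A1 * w$2 - B1 * w$1) * B2) / D"
      "h * (al + be) = h * ((w$1 * B2 - w$2 * A2) + (A1 * w$2 - B1 * w$1)) / D"
      unfolding al_be_def using D by (simp_all add: field_simps)
    then show "w$1 = s * (al * A1 + be * A2)" "w$2 = s * (al * B1 + be * B2)" "w$3 = h * (al + be)"
      using D by (simp_all add: C)
  qed
  note S = chord_cone_signs[OF sin_cos_squared_add2[of \<mu>] sin_cos_squared_add2[of \<delta>],
      folded A1_B1_A2_B2_def, OF e]
  have "0 \<le> s * w$3 - h * (A2 * w$1 + B2 * w$2)" "0 \<le> s * w$3 - h * (A1 * w$1 + B1 * w$2)"
    using ha hb unfolding mink_def trig by (simp_all add: algebra_simps)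
  then have "0 \<le> (2 * s * h * sin \<delta>^2) * al" "0 \<le> (2 * s * h * sin \<delta>^2) * be"
    unfolding S by (simp_all add: ac_simps)
  moreover have "0 < 2 * s * h * sin \<delta>^2" using s \<delta> by simp
  ultimately have "al \<ge> 0" "be \<ge> 0" by (simp_all add: zero_le_mult_iff)
  moreover have "w = al *\<^sub>R circle_point s h (\<mu> - \<delta>) + be *\<^sub>R circle_point s h (\<mu> + \<delta>)"
    unfolding vec3_eq_iff circle_point_def trig using e by (simp add: algebra_simps)
  ultimately show ?thesis by blast
qed

text \<open>A hyperbolic polygon inscribed in the circle meets the geodesic line through a chord
  only in that chord.\<close>
lemma hconv_circle_chord_line:
  assumes s: "s > 0" "h > 0" "h^2 = 1 + s^2" and \<delta>: "sin \<delta> > 0" "cos \<delta> > 0"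
    and V: "V \<subseteq> range (circle_point s h)" and q: "q \<in> hconv V"
    and on_line: "mink (chord_normal s h \<mu> \<delta>) q = 0"
  shows "q \<in> hchord s h \<mu> \<delta>"
proof -
  obtain l where l: "q \<in> hplane" "l > 0" "l *\<^sub>R q \<in> convex hull V" using q by (rule hconvE)
  have VH: "V \<subseteq> hplane" using V circle_point_hplane[OF s(3) s(2)] by auto
  have "mink (vector [h * cos \<phi>, h * sin \<phi>, s]) (l *\<^sub>R q) \<le> 0" for \<phi>
    by (rule convex_hull_mink_le[OF _ l(3)]) (use V mink_circle_point_tangent_le s in auto)
  moreover have "mink (chord_normal s h \<mu> \<delta>) (l *\<^sub>R q) = 0" using on_line by simp
  ultimately obtain al be where ab: "al \<ge> 0" "be \<ge> 0"
      "l *\<^sub>R q = al *\<^sub>R circle_point s h (\<mu> - \<delta>) + be *\<^sub>R circle_point s h (\<mu> + \<delta>)"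
    using chord_plane_cone_combination[OF s(1,2) \<delta>] by blast
  have "(l *\<^sub>R q) $ 3 > 0" by (rule convex_hull_hplane_third_pos[OF VH l(3)])
  then have "h * (al + be) > 0" using ab(3) by (simp add: circle_point_def algebra_simps)
  then have ab0: "al + be > 0" using s(2) by (simp add: zero_less_mult_iff)
  have "(l / (al + be)) *\<^sub>R q = (al / (al + be)) *\<^sub>R circle_point s h (\<mu> - \<delta>)
      + (be / (al + be)) *\<^sub>R circle_point s h (\<mu> + \<delta>)"
    using arg_cong[OF ab(3), of "scaleR (1 / (al + be))"] by (simp add: scaleR_add_right)
  moreover have "al / (al + be) + be / (al + be) = 1" using ab0 by (simp add: add_divide_distrib[symmetric])
  ultimately have "(l / (al + be)) *\<^sub>R q \<in> convex hull {circle_point s h (\<mu> - \<delta>), circle_point s h (\<mu> + \<delta>)}"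
    unfolding convex_hull_2 using ab ab0 by fastforce
  moreover have "l / (al + be) > 0" using l(2) ab0 by simp
  ultimately show ?thesis unfolding hchord_def hconv_def using l(1) by blast
qed

lemma convex_comb_unit_circle_le:
  fixes ca sa cb sb u v :: real
  assumes "ca^2 + sa^2 = 1" "cb^2 + sb^2 = 1" "u \<ge> 0" "v \<ge> 0" "u + v = 1"
  shows "(u * ca + v * cb)^2 + (u * sa + v * sb)^2 \<le> 1"
proof -
  have e: "(u * ca + v * cb)^2 + (u * sa + v * sb)^2 = u^2 + v^2 + 2 * u * v * (ca * cb + sa * sb)"
    using assms(1,2) unfolding power2_eq_square by algebra
  have "(ca - cb)^2 + (sa - sb)^2 = 2 - 2 * (ca * cb + sa * sb)"
    using assms(1,2) unfolding power2_eq_square by algebra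
  then have "ca * cb + sa * sb \<le> 1" by (smt (verit) zero_le_power2)
  then have "2 * u * v * (ca * cb + sa * sb) \<le> 2 * u * v" using assms(3,4) by (simp add: mult_left_le)
  then have "(u * ca + v * cb)^2 + (u * sa + v * sb)^2 \<le> (u + v)^2" unfolding e by (simp add: power2_sum)
  then show ?thesis using assms(5) by simp
qed

lemma rotated_coordinates:
  fixes h w1 w2 cm sm cm1 sm1 cm2 sm2 :: real
  shows "cm^2 + sm^2 = 1 \<Longrightarrow>
      h^2 * (w1^2 + w2^2) = (h * (cm * w1 + sm * w2))^2 + (h * (- sm * w1 + cm * w2))^2"
    "h^2 * (w1^2 + w2^2) * (cm1 * cm2 + sm1 * sm2)
      = (h * (cm1 * w1 + sm1 * w2)) * (h * (cm2 * w1 + sm2 * w2))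
        + (h * (- sm1 * w1 + cm1 * w2)) * (h * (- sm2 * w1 + cm2 * w2))"
  unfolding power2_eq_square by algebra+

text \<open>A point of the disk of radius \<open>T\<close>, at squared distance \<open>W\<close> from the centre, with coordinates
  \<open>(G\<^sub>i, H\<^sub>i)\<close> in two rotated frames and \<open>G\<^sub>i = cos \<delta>\<^sub>i T\<close>: the cosine \<open>U\<close> of the rotation angle is
  at least \<open>cos (\<delta>\<^sub>1 + \<delta>\<^sub>2)\<close>.\<close>
lemma disk_point_rotation_cos_ge:
  fixes W T G1 G2 H1 H2 U c1 c2 s1 s2 :: real
  assumes "W \<le> T^2" "T > 0" "W = G1^2 + H1^2" "W = G2^2 + H2^2" "G1 = c1 * T" "G2 = c2 * T"
    "W * U = G1 * G2 + H1 * H2" "c1^2 + s1^2 = 1" "c2^2 + s2^2 = 1" "s1 \<ge> 0" "s2 \<ge> 0" "c1 > 0"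
    "c1 * c2 - s1 * s2 \<ge> 0"
  shows "U \<ge> c1 * c2 - s1 * s2"
proof -
  have H_le: "\<bar>H\<bar> \<le> s' * T" if "W = (c' * T)^2 + H^2" "c'^2 + s'^2 = 1" "s' \<ge> 0" for H c' s'
  proof -
    have "H^2 \<le> (1 - c'^2) * T^2" using assms(1) that(1) by (simp add: power_mult_distrib algebra_simps)
    also have "\<dots> = (s' * T)^2" using that(2) by (simp add: power_mult_distrib)
    finally show ?thesis using abs_le_square_iff[of H "s' * T"] assms(2) that(3) by simp
  qed
  have "\<bar>H1 * H2\<bar> \<le> (s1 * T) * (s2 * T)"
    unfolding abs_mult using H_le[of c1 H1 s1] H_le[of c2 H2 s2] assms
    by (intro mult_mono) auto
  then have "W * U \<ge> (c1 * c2 - s1 * s2) * T^2"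
    using assms(5-7) by (simp add: power2_eq_square algebra_simps abs_le_iff)
  moreover have "(c1 * c2 - s1 * s2) * T^2 \<ge> (c1 * c2 - s1 * s2) * W"
    using assms(1,13) by (simp add: mult_left_mono)
  ultimately have "W * U \<ge> W * (c1 * c2 - s1 * s2)" by (simp add: mult.commute)
  moreover have "W > 0"
    using assms(2,3,5,12) by (simp add: add_pos_nonneg)
  ultimately show ?thesis by (simp add: mult_le_cancel_left_pos)
qed

lemma hchords_meet_cos_ge:
  assumes s: "s > 0" "h > 0" and \<delta>: "sin \<delta>1 > 0" "cos \<delta>1 > 0" "sin \<delta>2 \<ge> 0" "cos (\<delta>1 + \<delta>2) \<ge> 0"
    and q: "q \<in> hchord s h \<mu>1 \<delta>1" "q \<in> hchord s h \<mu>2 \<delta>2"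
  shows "cos (\<delta>1 + \<delta>2) \<le> cos (\<mu>1 - \<mu>2)"
proof -
  obtain l where l: "l > 0" "l *\<^sub>R q \<in> convex hull {circle_point s h (\<mu>1 - \<delta>1), circle_point s h (\<mu>1 + \<delta>1)}"
    using q(1) unfolding hchord_def by (auto elim!: hconvE)
  define w where "w = l *\<^sub>R q"
  obtain u v where uv: "u \<ge> 0" "v \<ge> 0" "u + v = 1"
      "w = u *\<^sub>R circle_point s h (\<mu>1 - \<delta>1) + v *\<^sub>R circle_point s h (\<mu>1 + \<delta>1)"
    using l(2) unfolding convex_hull_2 w_def by blast
  have w3: "w$3 = h" using uv by (simp add: circle_point_def flip: distrib_right)
  have "(u * cos (\<mu>1 - \<delta>1) + v * cos (\<mu>1 + \<delta>1))^2 + (u * sin (\<mu>1 - \<delta>1) + v * sin (\<mu>1 + \<delta>1))^2 \<le> 1"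
    by (rule convex_comb_unit_circle_le) (use uv in auto)
  moreover have "w$1 = s * (u * cos (\<mu>1 - \<delta>1) + v * cos (\<mu>1 + \<delta>1))"
      "w$2 = s * (u * sin (\<mu>1 - \<delta>1) + v * sin (\<mu>1 + \<delta>1))"
    using uv by (simp_all add: circle_point_def algebra_simps)
  ultimately have "w$1^2 + w$2^2 \<le> s^2"
    by (simp add: power_mult_distrib flip: distrib_left)
      (metis mult_left_le zero_le_power2 mult.commute)
  then have W: "h^2 * (w$1^2 + w$2^2) \<le> (s * w$3)^2"
    unfolding w3 using s by (simp add: power_mult_distrib mult_left_mono mult.commute)
  have "mink (chord_normal s h \<mu>1 \<delta>1) w = 0" "mink (chord_normal s h \<mu>2 \<delta>2) w = 0"
    using mink_chord_normal_hchord[OF q(1)] mink_chord_normal_hchord[OF q(2)] by (simp_all add: w_def)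
  then have g: "h * (cos \<mu>1 * w$1 + sin \<mu>1 * w$2) = cos \<delta>1 * (s * w$3)"
      "h * (cos \<mu>2 * w$1 + sin \<mu>2 * w$2) = cos \<delta>2 * (s * w$3)"
    by (simp_all add: mink_def chord_normal_def algebra_simps)
  have "cos \<mu>1 * cos \<mu>2 + sin \<mu>1 * sin \<mu>2 \<ge> cos \<delta>1 * cos \<delta>2 - sin \<delta>1 * sin \<delta>2"
  proof (rule disk_point_rotation_cos_ge[OF W _ rotated_coordinates(1) rotated_coordinates(1) g
        rotated_coordinates(2)])
    show "0 < s * w$3" using s w3 by simp
    show "0 \<le> cos \<delta>1 * cos \<delta>2 - sin \<delta>1 * sin \<delta>2" using \<delta>(4) by (simp add: cos_add)
  qed (use \<delta> in simp_all)
  then show ?thesis by (simp add: cos_add cos_diff)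
qed

lemma chord_normals_gram_bounds:
  fixes h s U kap c1 c2 :: real
  assumes "h^2 = 1 + s^2" "kap \<le> U" "1/2 < kap" "s^2 < kap - 1/2"
    "0 \<le> c1" "c1 \<le> 1" "0 \<le> c2" "c2 \<le> 1"
  shows "0 < h^2 * U - s^2 * c1 * c2"
    "(h^2 - s^2 * c1^2) * (h^2 - s^2 * c2^2) < 4 * (h^2 * U - s^2 * c1 * c2)^2"
proof -
  have "s^2 * c1 * c2 \<le> s^2" using assms(5-8) by (simp add: mult.assoc mult_left_le mult_le_one)
  moreover have "h^2 * U \<ge> h^2 * kap" using assms(2) by (simp add: mult_left_mono)
  moreover have "h^2 * (kap - 1/2) > s^2"
  proof -
    have "h^2 * (kap - 1/2) = (kap - 1/2) + s^2 * (kap - 1/2)" using assms(1) by (simp add: algebra_simps)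
    moreover have "s^2 * (kap - 1/2) \<ge> 0" using assms(3) by simp
    ultimately show ?thesis using assms(4) by linarith
  qed
  ultimately have X: "h^2 * U - s^2 * c1 * c2 > h^2/2" by (simp add: algebra_simps)
  have hp: "h^2 \<ge> 1" using assms(1) by simp
  then show "0 < h^2 * U - s^2 * c1 * c2" using X by linarith
  have "s^2 * c1^2 \<le> s^2" "s^2 * c2^2 \<le> s^2"
    using assms(5-8) by (simp_all add: power_le_one mult_left_le)
  then have "(h^2 - s^2 * c1^2) * (h^2 - s^2 * c2^2) \<le> h^2 * h^2"
    using assms(1) by (intro mult_mono) auto
  also have "h^2 * h^2 < 4 * (h^2 * U - s^2 * c1 * c2)^2"
  proof -
    have "(h^2/2)^2 < (h^2 * U - s^2 * c1 * c2)^2" using X hp by (intro power_strict_mono) auto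
    then show ?thesis by (simp add: power2_eq_square)
  qed
  finally show "(h^2 - s^2 * c1^2) * (h^2 - s^2 * c2^2) < 4 * (h^2 * U - s^2 * c1 * c2)^2" .
qed

subsection \<open>Regular polygons\<close>

lemma std_vertex_eq_circle_point:
  "std_vertex N \<rho> k = circle_point (sinh \<rho>) (cosh \<rho>) (2 * pi * real k / real N)"
  by (simp add: std_vertex_def circle_point_def)

lemma std_vertex_mod:
  assumes "N > 0"
  shows "std_vertex N \<rho> (k mod N) = std_vertex N \<rho> k"
proof -
  have "real k = real (k mod N) + real N * real (k div N)"
    by (metis mod_div_mult_eq of_nat_add of_nat_mult mult.commute)
  then have "2 * pi * real (k mod N) / real N = 2 * pi * real k / real N - 2 * real (k div N) * pi"
    using assms by (simp add: field_simps)
  then show ?thesis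
    unfolding std_vertex_eq_circle_point circle_point_def by (simp add: cos_diff sin_diff)
qed

lemma std_vertex_hplane: "std_vertex N \<rho> k \<in> hplane"
  unfolding std_vertex_eq_circle_point by (rule circle_point_hplane) (simp_all add: cosh_square_eq)

lemma rdiag_eq_image:
  assumes f: "hyp_isometry f" and N: "N > 0"
  shows "rdiag N \<rho> f i m = iso_lin f ` hchord (sinh \<rho>) (cosh \<rho>)
    (2 * pi * real i / real N + pi * real m / real N) (pi * real m / real N)"
proof -
  have "(2 * pi * real i / real N + pi * real m / real N) - pi * real m / real N
      = 2 * pi * real i / real N"
    "(2 * pi * real i / real N + pi * real m / real N) + pi * real m / real N
      = 2 * pi * real (i + m) / real N"
    using N by (simp_all add: field_simps)
  moreover have "rdiag N \<rho> f i m = hconv (f ` {std_vertex N \<rho> i, std_vertex N \<rho> (i + m)})"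
    unfolding rdiag_def hseg_def rvertex_def std_vertex_mod[OF N] by simp
  moreover have "\<dots> = iso_lin f ` hconv {std_vertex N \<rho> i, std_vertex N \<rho> (i + m)}"
    by (rule hconv_image_hyp_isometry[OF f]) (simp add: std_vertex_hplane)
  ultimately show ?thesis
    unfolding hchord_def std_vertex_eq_circle_point by simp
qed

lemma rpolygon_eq_image:
  assumes f: "hyp_isometry f" and N: "N > 0"
  shows "rpolygon N \<rho> f = iso_lin f ` hconv (std_vertex N \<rho> ` {..<N})"
proof -
  have "rvertex N \<rho> f ` {..<N} = f ` (std_vertex N \<rho> ` {..<N})"
    unfolding rvertex_def by (auto simp: image_iff)
  then show ?thesis
    unfolding rpolygon_def by (simp add: hconv_image_hyp_isometry[OF f] std_vertex_hplane image_subset_iff)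
qed

lemma rdiag_normal:
  fixes i m :: nat
  assumes f: "hyp_isometry f" and N: "N > 0" and \<rho>: "\<rho> > 0"
    and \<delta>: "sin (pi * real m / real N) > 0" "cos (pi * real m / real N) > 0"
  defines "n \<equiv> iso_lin f (chord_normal (sinh \<rho>) (cosh \<rho>)
    (2 * pi * real i / real N + pi * real m / real N) (pi * real m / real N))"
  shows "\<And>q. q \<in> rdiag N \<rho> f i m \<Longrightarrow> mink n q = 0"
    and "\<And>q. q \<in> rpolygon N \<rho> f \<Longrightarrow> mink n q = 0 \<Longrightarrow> q \<in> rdiag N \<rho> f i m"
    and "mink n (rcentre f) > 0"
proof -
  show "mink n q = 0" if "q \<in> rdiag N \<rho> f i m" for q
    using that mink_chord_normal_hchord
    by (auto simp: rdiag_eq_image[OF f N] n_def iso_lin_mink[OF f])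
  show "q \<in> rdiag N \<rho> f i m" if qP: "q \<in> rpolygon N \<rho> f" "mink n q = 0" for q
  proof -
    obtain q' where q': "q = iso_lin f q'" "q' \<in> hconv (std_vertex N \<rho> ` {..<N})"
      using qP(1) unfolding rpolygon_eq_image[OF f N] by blast
    have "q' \<in> hchord (sinh \<rho>) (cosh \<rho>)
        (2 * pi * real i / real N + pi * real m / real N) (pi * real m / real N)"
      using \<rho> \<delta> q'(2) qP(2) unfolding q'(1) n_def iso_lin_mink[OF f]
      by (intro hconv_circle_chord_line) (auto simp: cosh_square_eq std_vertex_eq_circle_point)
    then show ?thesis by (simp add: q'(1) rdiag_eq_image[OF f N])
  qed
  have "rcentre f = iso_lin f hcentre0"
    unfolding rcentre_def by (rule hyp_isometry_eq_iso_lin[OF f]) (simp add: hcentre0_def hplane_def mink_def)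
  then show "mink n (rcentre f) > 0"
    using \<rho> \<delta> by (simp add: n_def iso_lin_mink[OF f] mink_chord_normal_hcentre0)
qed

lemma connected_component_mink_pos:
  assumes q: "q \<in> connected_component_set S c" and nz: "\<And>z. z \<in> S \<Longrightarrow> mink n z \<noteq> 0"
    and c: "mink n c > 0"
  shows "mink n q > 0"
proof (rule ccontr)
  assume "\<not> mink n q > 0"
  then have qn: "inner (vector [n$1, n$2, - n$3] :: real^3) q \<le> 0" by (simp add: mink_eq_inner)
  have cS: "c \<in> connected_component_set S c"
    using q by (metis connected_component_eq_empty connected_component_refl_eq empty_iff mem_Collect_eq)
  have "0 \<le> inner (vector [n$1, n$2, - n$3] :: real^3) c" using c by (simp add: mink_eq_inner)
  then obtain z where "z \<in> connected_component_set S c" "inner (vector [n$1, n$2, - n$3] :: real^3) z = 0"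
    using connected_ivt_hyperplane[OF connected_connected_component q cS qn] by blast
  then show False using nz connected_component_subset by (fastforce simp: mink_eq_inner)
qed

lemma rdiag_half_angle_bounds:
  assumes N: "0 < N" "3 * (m1 + m2) < N" and m: "1 \<le> m1" "1 \<le> m2"
  defines "\<delta>1 \<equiv> pi * real m1 / real N" and "\<delta>2 \<equiv> pi * real m2 / real N"
  shows "0 < sin \<delta>1" "0 < cos \<delta>1" "0 < sin \<delta>2" "0 < cos \<delta>2" "1/2 < cos (\<delta>1 + \<delta>2)"
proof -
  have "3 * real (m1 + m2) < real N" using N(2) by linarith
  then have "real (m1 + m2) / real N < 1 / 3" using N(1) by (simp add: field_simps)
  then have "pi * (real (m1 + m2) / real N) < pi * (1 / 3)"
    by (rule mult_strict_left_mono[OF _ pi_gt_zero])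
  moreover have "\<delta>1 + \<delta>2 = pi * (real (m1 + m2) / real N)"
    by (simp add: \<delta>1_def \<delta>2_def add_divide_distrib distrib_left)
  ultimately have "0 < \<delta>1" "0 < \<delta>2" "\<delta>1 + \<delta>2 < pi / 3"
    using N m by (auto simp: \<delta>1_def \<delta>2_def)
  then show "0 < sin \<delta>1" "0 < cos \<delta>1" "0 < sin \<delta>2" "0 < cos \<delta>2" "1/2 < cos (\<delta>1 + \<delta>2)"
    using cos_monotone_0_pi[of "\<delta>1 + \<delta>2" "pi / 3"]
    by (auto simp: cos_60 intro!: sin_gt_zero cos_gt_zero)
qed

lemma rpolygon_internal_angle_gt:
  assumes f: "hyp_isometry f" and N: "0 < N" "3 * (m1 + m2) < N" and m: "1 \<le> m1" "1 \<le> m2"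
    and \<rho>: "0 < \<rho>" "sinh \<rho> ^ 2 < cos (pi * real (m1 + m2) / real N) - 1/2"
    and p: "p \<in> rdiag N \<rho> f i1 m1 \<inter> rdiag N \<rho> f i2 m2"
    and ia: "internal_angle (rpolygon N \<rho> f) (rcentre f) (rdiag N \<rho> f i1 m1) (rdiag N \<rho> f i2 m2) p \<theta>"
  shows "2 * pi / 3 < \<theta>"
proof -
  define \<delta>1 \<delta>2 where "\<delta>1 = pi * real m1 / real N" "\<delta>2 = pi * real m2 / real N"
  define \<mu>1 \<mu>2 where "\<mu>1 = 2 * pi * real i1 / real N + \<delta>1" "\<mu>2 = 2 * pi * real i2 / real N + \<delta>2"
  define n1 n2 where "n1 = chord_normal (sinh \<rho>) (cosh \<rho>) \<mu>1 \<delta>1"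
    "n2 = chord_normal (sinh \<rho>) (cosh \<rho>) \<mu>2 \<delta>2"
  note sc = rdiag_half_angle_bounds[OF N m, folded \<delta>1_\<delta>2_def]
  note R1 = rdiag_normal[OF f N(1) \<rho>(1), where i = i1 and m = m1,
      folded \<delta>1_\<delta>2_def, folded \<mu>1_\<mu>2_def, folded n1_n2_def]
  note R2 = rdiag_normal[OF f N(1) \<rho>(1), where i = i2 and m = m2,
      folded \<delta>1_\<delta>2_def, folded \<mu>1_\<mu>2_def, folded n1_n2_def]
  have cos_le: "cos (\<delta>1 + \<delta>2) \<le> cos (\<mu>1 - \<mu>2)"
  proof -
    obtain q1 q2 where "p = iso_lin f q1" "q1 \<in> hchord (sinh \<rho>) (cosh \<rho>) \<mu>1 \<delta>1"
        "p = iso_lin f q2" "q2 \<in> hchord (sinh \<rho>) (cosh \<rho>) \<mu>2 \<delta>2"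
      using p unfolding rdiag_eq_image[OF f N(1)] \<mu>1_\<mu>2_def \<delta>1_\<delta>2_def by blast
    moreover from this have "q1 = q2" using inj_iso_lin[OF f] by (auto dest: injD)
    ultimately show ?thesis
      using sc \<rho>(1) by (intro hchords_meet_cos_ge[where q = q1]) auto
  qed
  have "(cosh \<rho>)^2 = 1 + (sinh \<rho>)^2" by (simp add: cosh_square_eq)
  moreover have "sinh \<rho> ^ 2 < cos (\<delta>1 + \<delta>2) - 1/2"
    using \<rho>(2) by (simp add: \<delta>1_\<delta>2_def add_divide_distrib distrib_left)
  ultimately have gram: "0 < cosh \<rho>^2 * cos (\<mu>1 - \<mu>2) - sinh \<rho>^2 * cos \<delta>1 * cos \<delta>2"
    "(cosh \<rho>^2 - sinh \<rho>^2 * cos \<delta>1^2) * (cosh \<rho>^2 - sinh \<rho>^2 * cos \<delta>2^2)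
      < 4 * (cosh \<rho>^2 * cos (\<mu>1 - \<mu>2) - sinh \<rho>^2 * cos \<delta>1 * cos \<delta>2)^2"
    using chord_normals_gram_bounds[OF _ cos_le sc(5)] sc by auto
  have M: "mink (iso_lin f n1) (iso_lin f n2)
      = cosh \<rho>^2 * cos (\<mu>1 - \<mu>2) - sinh \<rho>^2 * cos \<delta>1 * cos \<delta>2"
    "mink (iso_lin f n1) (iso_lin f n1) = cosh \<rho>^2 - sinh \<rho>^2 * cos \<delta>1^2"
    "mink (iso_lin f n2) (iso_lin f n2) = cosh \<rho>^2 - sinh \<rho>^2 * cos \<delta>2^2"
    by (simp_all add: iso_lin_mink[OF f] n1_n2_def mink_chord_normals power2_eq_square)
  show ?thesis
  proof (rule internal_angle_gt_of_normals[OF ia])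
    show "p \<in> hplane" using p by (auto simp: rdiag_def hseg_def hconv_def)
    show "mink (iso_lin f n1) q > 0 \<and> mink (iso_lin f n2) q > 0"
      if "q \<in> connected_component_set
        (rpolygon N \<rho> f - (rdiag N \<rho> f i1 m1 \<union> rdiag N \<rho> f i2 m2)) (rcentre f)" for q
      using sc R1 R2 by (blast intro: connected_component_mink_pos[OF that])
    show "mink (iso_lin f n1) (iso_lin f n2) > 0"
      "4 * (mink (iso_lin f n1) (iso_lin f n2))^2
        > mink (iso_lin f n1) (iso_lin f n1) * mink (iso_lin f n2) (iso_lin f n2)"
      unfolding M using gram by simp_all
  qed (use R1 R2 sc in auto)
qed

theorem proposition3p5:
  fixes N :: nat
  assumes "N > 6"
  shows "\<exists>r>0. \<forall>\<rho> f. 0 < \<rho> \<and> \<rho> < r \<and> hyp_isometry f \<longrightarrow>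
           (\<forall>i1 m1 i2 m2 p \<theta>.
              1 \<le> m1 \<and> m1 \<le> (N - 1) div 6 \<and> 1 \<le> m2 \<and> m2 \<le> (N - 1) div 6 \<and>
              rdiag N \<rho> f i1 m1 \<noteq> rdiag N \<rho> f i2 m2 \<and>
              p \<in> rdiag N \<rho> f i1 m1 \<inter> rdiag N \<rho> f i2 m2 \<and>
              internal_angle (rpolygon N \<rho> f) (rcentre f)
                 (rdiag N \<rho> f i1 m1) (rdiag N \<rho> f i2 m2) p \<theta>
              \<longrightarrow> \<theta> > 2 * pi / 3)"
proof -
  define y where "y = 2 * pi * real ((N - 1) div 6) / real N"
  have "6 * ((N - 1) div 6) < N" using assms by linarith
  then have y: "0 \<le> y" "y < pi / 3" using assms by (auto simp: y_def field_simps)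
  then have cos_y: "1/2 < cos y" using cos_monotone_0_pi[of y "pi / 3"] by (simp add: cos_60)
  define r where "r = arsinh (sqrt (cos y - 1/2))"
  have "0 < r" using cos_y by (simp add: r_def)
  moreover have "2 * pi / 3 < \<theta>"
    if \<rho>: "0 < \<rho>" "\<rho> < r" and f: "hyp_isometry f" and m: "1 \<le> m1" "m1 \<le> (N - 1) div 6"
      "1 \<le> m2" "m2 \<le> (N - 1) div 6" and p: "p \<in> rdiag N \<rho> f i1 m1 \<inter> rdiag N \<rho> f i2 m2"
      and ia: "internal_angle (rpolygon N \<rho> f) (rcentre f) (rdiag N \<rho> f i1 m1) (rdiag N \<rho> f i2 m2) p \<theta>"
    for \<rho> f i1 m1 i2 m2 p \<theta>
  proof (rule rpolygon_internal_angle_gt[OF f _ _ m(1,3) \<rho>(1) _ p ia])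
    have "pi * real (m1 + m2) / real N \<le> y" using m by (auto simp: y_def divide_right_mono)
    then have "cos y \<le> cos (pi * real (m1 + m2) / real N)" using y by (intro cos_monotone_0_pi_le) auto
    moreover have "sinh \<rho> ^ 2 < sinh r ^ 2" using \<rho> by (intro power_strict_mono) auto
    ultimately show "sinh \<rho> ^ 2 < cos (pi * real (m1 + m2) / real N) - 1/2"
      using cos_y by (simp add: r_def)
  qed (use assms m in presburger)+
  ultimately show ?thesis by blast
qed

end
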